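(* In the model described in the context, for $f\in\mathbb{R}$ let $X(f)\subseteq\mathbb{R}_+$ be the set of symmetric leader reactions when all followers take forward position $f$. There exist unique $\underline f,\bar f\in\mathbb{R}$ such that $f\in[\underline f,\bar f]$ if and only if $\frac1M(\alpha_x-\triangle C+f)\in X(f)$. Moreover: (1) $y_j\big(f\mathbf1,\frac1M(\alpha_x-\triangle C+f)\mathbf1\big)=0$ for all $f\in[\underline f,\bar f]$; (2) $\bar f-\underline f=O(\alpha_x/M)$.
   Context: Model: $M\ge1$ leaders and $N\ge2$ followers; inverse demand $P(q)=\alpha-\beta q$, $\alpha,\beta>0$; leader marginal cost $C$, follower marginal cost $c$, $c\ge C>0$; follower capacity $k>0$. Leader $i$ produces $x_i\ge0$; follower $j$ takes forward position $f_j\in\mathbb{R}$ and spot production $y_j\in[0,k]$. Given $\mathbf f,\mathbf x$, the spot market is the game among followers where follower $j$ chooses $y_j\in[0,k]$ to maximize $P(\sum_ix_i+\sum_{j'}y_{j'})(y_j-f_j)-cy_j$; its unique Nash equilibrium is $\mathbf y(\mathbf f,\mathbf x)=(y_1(\mathbf f,\mathbf x),\dots,y_N(\mathbf f,\mathbf x))$. Leader $i$'s payoff is $\psi_i=(P(\sum_ix_i+\sum_{j'}y_{j'}(\mathbf f,\mathbf x))-C)x_i$; $\psi_i(\bar x;x\mathbf1,f\mathbf1)$ denotes this payoff when leader $i$ produces $\bar x$, all other leaders produce $x$, and all followers take $f$. $X(f)=\{x\in\mathbb{R}_+:\ \psi_i(x;x\mathbf1,f\mathbf1)\ge\psi_i(\bar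 x;x\mathbf1,f\mathbf1)\ \forall\bar x\in\mathbb{R}_+,\ \forall i\}$. $\alpha_x=(\alpha-C)/\beta$, $\triangle C=(c-C)/\beta$. $O(\cdot)$ is standard Landau notation. *)

theory Defs
  imports Main "HOL.Real"
begin

definition price :: "real \<Rightarrow> real \<Rightarrow> real \<Rightarrow> real" where
  "price \<alpha> \<beta> q = \<alpha> - \<beta> * q"

text \<open>Leaders are indexed by 0..<M, followers by 0..<N.  Vectors are functions on nat;
  spot production vectors are normalised to 0 outside 0..<N so that the equilibrium is
  a unique object.\<close>

definition spot_payoff ::
  "real \<Rightarrow> real \<Rightarrow> real \<Rightarrow> nat \<Rightarrow> nat \<Rightarrow> (nat \<Rightarrow> real) \<Rightarrow> (nat \<Rightarrow> real) \<Rightarrow> (nat \<Rightarrow> real) \<Rightarrow> nat \<Rightarrow> real" where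
  "spot_payoff \<alpha> \<beta> c M N f x y j =
     price \<alpha> \<beta> ((\<Sum>i<M. x i) + (\<Sum>j'<N. y j')) * (y j - f j) - c * y j"

definition spot_NE ::
  "real \<Rightarrow> real \<Rightarrow> real \<Rightarrow> real \<Rightarrow> nat \<Rightarrow> nat \<Rightarrow> (nat \<Rightarrow> real) \<Rightarrow> (nat \<Rightarrow> real) \<Rightarrow> (nat \<Rightarrow> real) \<Rightarrow> bool" where
  "spot_NE \<alpha> \<beta> c k M N f x y \<longleftrightarrow>
     (\<forall>j. N \<le> j \<longrightarrow> y j = 0) \<and>
     (\<forall>j<N. 0 \<le> y j \<and> y j \<le> k \<and>
        (\<forall>z. 0 \<le> z \<and> z \<le> k \<longrightarrow>
           spot_payoff \<alpha> \<beta> c M N f x (y(j := z)) j \<le> spot_payoff \<alpha> \<beta> c M N f x y j))"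

definition spot_y ::
  "real \<Rightarrow> real \<Rightarrow> real \<Rightarrow> real \<Rightarrow> nat \<Rightarrow> nat \<Rightarrow> (nat \<Rightarrow> real) \<Rightarrow> (nat \<Rightarrow> real) \<Rightarrow> (nat \<Rightarrow> real)" where
  "spot_y \<alpha> \<beta> c k M N f x = (THE y. spot_NE \<alpha> \<beta> c k M N f x y)"

definition leader_payoff ::
  "real \<Rightarrow> real \<Rightarrow> real \<Rightarrow> real \<Rightarrow> real \<Rightarrow> nat \<Rightarrow> nat \<Rightarrow> (nat \<Rightarrow> real) \<Rightarrow> (nat \<Rightarrow> real) \<Rightarrow> nat \<Rightarrow> real" where
  "leader_payoff \<alpha> \<beta> C c k M N f x i =
     (price \<alpha> \<beta> ((\<Sum>i'<M. x i') + (\<Sum>j<N. spot_y \<alpha> \<beta> c k M N f x j)) - C) * x i"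

definition psi_sym ::
  "real \<Rightarrow> real \<Rightarrow> real \<Rightarrow> real \<Rightarrow> real \<Rightarrow> nat \<Rightarrow> nat \<Rightarrow> nat \<Rightarrow> real \<Rightarrow> real \<Rightarrow> real \<Rightarrow> real" where
  "psi_sym \<alpha> \<beta> C c k M N i xbar x f =
     leader_payoff \<alpha> \<beta> C c k M N (\<lambda>_. f) ((\<lambda>_. x)(i := xbar)) i"

definition Xset ::
  "real \<Rightarrow> real \<Rightarrow> real \<Rightarrow> real \<Rightarrow> real \<Rightarrow> nat \<Rightarrow> nat \<Rightarrow> real \<Rightarrow> real set" where
  "Xset \<alpha> \<beta> C c k M N f =
     {x. 0 \<le> x \<and> (\<forall>i<M. \<forall>xbar. 0 \<le> xbar \<longrightarrow>
          psi_sym \<alpha> \<beta> C c k M N i x x f \<ge> psi_sym \<alpha> \<beta> C c k M N i xbar x f)}"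

end

theory Submission
  imports Defs "HOL-Analysis.Elementary_Metric_Spaces"
begin

text \<open>With symmetric forwards the spot equilibrium is symmetric and explicit: every follower
  produces the clamp to [0,k] of the unconstrained Cournot quantity.  Substituting it, a leader
  deviating from the symmetric profile with total leader output T faces a piecewise quadratic
  profit, and T/M is a best reply exactly when T lies in an interval
  [M \<alpha>x/(M+1), T'] with T' \<le> \<alpha>x (just {0} if \<alpha>x \<le> 0):
  upward deviations are unprofitable iff T is at least the Cournot total of the leaders alone,
  downward ones become more attractive as T grows, and the set is closed by continuity.
  The leader total associated with the forward position f is T = \<alpha>x - \<triangle>C + f, at which the
  unconstrained follower quantity vanishes, so the followers stay out of the spot market.\<close>

subsection \<open>The spot market\<close>

lemma sum_lessThan_fun_upd:
  fixes y :: "nat \<Rightarrow> 'a::ab_group_add"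
  assumes "j < N"
  shows "(\<Sum>j'<N. (y(j := w)) j') = (\<Sum>j'<N. y j') - y j + w"
proof -
  have "(\<Sum>j'<N. (y(j := w)) j') = (\<Sum>j'<N. y j' + (if j' = j then w - y j else 0))"
    by (rule sum.cong) auto
  also have "\<dots> = (\<Sum>j'<N. y j') + (w - y j)"
    using assms by (simp add: sum.distrib)
  finally show ?thesis by simp
qed

lemma spot_payoff_fun_upd_diff:
  assumes "j < N"
  shows "spot_payoff \<alpha> \<beta> c M N f x (y(j := w)) j - spot_payoff \<alpha> \<beta> c M N f x y j
    = (w - y j) * (\<alpha> - \<beta> * ((\<Sum>i<M. x i) + (\<Sum>j'<N. y j')) - c - \<beta> * (y j - f j))
      - \<beta> * (w - y j)\<^sup>2"
  unfolding spot_payoff_def price_def sum_lessThan_fun_upd[OF assms]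
  by (simp add: power2_eq_square algebra_simps)

text \<open>Moving from v a small fraction of the way towards z gains to first order
  (z - v) g and loses only to second order.\<close>
lemma quadratic_max_imp_variational_ineq:
  fixes a b v z g \<beta> :: real
  assumes max: "\<And>w. a \<le> w \<Longrightarrow> w \<le> b \<Longrightarrow> (w - v) * g - \<beta> * (w - v)\<^sup>2 \<le> 0"
    and v: "a \<le> v" "v \<le> b" and z: "a \<le> z" "z \<le> b" and \<beta>: "\<beta> > 0"
  shows "(z - v) * g \<le> 0"
proof (rule ccontr)
  assume "\<not> ?thesis"
  hence gain: "(z - v) * g > 0" by simp
  define e where "e = (z - v)\<^sup>2"
  have e: "e > 0" using gain by (auto simp: e_def)
  define t where "t = min 1 ((z - v) * g / (2 * \<beta> * e))"
  have t: "0 < t" "t \<le> 1" "t \<le> (z - v) * g / (2 * \<beta> * e)"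
    using gain e \<beta> by (auto simp: t_def)
  have "a \<le> (1 - t) * v + t * z" "(1 - t) * v + t * z \<le> b"
    using convex_bound_le[of v b z "1 - t" t] convex_bound_le[of "-v" "-a" "-z" "1 - t" t] t v z
    by (auto simp: algebra_simps)
  then have "(t * (z - v)) * g - \<beta> * (t * (z - v))\<^sup>2 \<le> 0"
    using max[of "(1 - t) * v + t * z"] by (simp add: algebra_simps)
  hence "t * ((z - v) * g) \<le> t * (\<beta> * t * e)"
    unfolding e_def by (simp add: power2_eq_square algebra_simps)
  hence "(z - v) * g \<le> \<beta> * t * e" using t by simp
  also have "\<dots> \<le> \<beta> * ((z - v) * g / (2 * \<beta> * e)) * e"
    using t \<beta> e by (intro mult_right_mono mult_left_mono) auto
  also have "\<dots> = (z - v) * g / 2" using \<beta> e by (simp add: field_simps)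
  finally show False using gain by linarith
qed

lemma spot_NE_variational_ineq:
  assumes ne: "spot_NE \<alpha> \<beta> c k M N f x y" and \<beta>: "\<beta> > 0" and j: "j < N"
    and z: "0 \<le> z" "z \<le> k"
  shows "(z - y j) * (\<alpha> - \<beta> * ((\<Sum>i<M. x i) + (\<Sum>j'<N. y j')) - c - \<beta> * (y j - f j)) \<le> 0"
proof (rule quadratic_max_imp_variational_ineq[OF _ _ _ z \<beta>])
  show "0 \<le> y j" "y j \<le> k" using ne j by (auto simp: spot_NE_def)
  fix w :: real assume "0 \<le> w" "w \<le> k"
  then have "spot_payoff \<alpha> \<beta> c M N f x (y(j := w)) j - spot_payoff \<alpha> \<beta> c M N f x y j \<le> 0"
    using ne j by (auto simp: spot_NE_def)
  then show "(w - y j) * (\<alpha> - \<beta> * ((\<Sum>i<M. x i) + (\<Sum>j'<N. y j')) - c - \<beta> * (y j - f j))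
      - \<beta> * (w - y j)\<^sup>2 \<le> 0"
    by (simp add: spot_payoff_fun_upd_diff[OF j])
qed

text \<open>Adding the two variational inequalities and summing over followers bounds
  \<beta> times the sum of the squares of Y - Y' and of all y j - y' j by 0.\<close>
lemma spot_NE_unique:
  assumes ne: "spot_NE \<alpha> \<beta> c k M N f x y" and ne': "spot_NE \<alpha> \<beta> c k M N f x y'"
    and \<beta>: "\<beta> > 0"
  shows "y = y'"
proof -
  define X where "X = (\<Sum>i<M. x i)"
  define Y where "Y = (\<Sum>j'<N. y j')"
  define Y' where "Y' = (\<Sum>j'<N. y' j')"
  have "\<beta> * (Y - Y') * (y j - y' j) + \<beta> * (y j - y' j)\<^sup>2 \<le> 0" if j: "j < N" for j
  proof -
    have "0 \<le> y j" "y j \<le> k" "0 \<le> y' j" "y' j \<le> k"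
      using ne ne' j by (auto simp: spot_NE_def)
    then have "(y' j - y j) * (\<alpha> - \<beta> * (X + Y) - c - \<beta> * (y j - f j))
        + (y j - y' j) * (\<alpha> - \<beta> * (X + Y') - c - \<beta> * (y' j - f j)) \<le> 0"
      using spot_NE_variational_ineq[OF ne \<beta> j, of "y' j"]
        spot_NE_variational_ineq[OF ne' \<beta> j, of "y j"]
      unfolding X_def Y_def Y'_def by linarith
    then show ?thesis by (simp add: power2_eq_square algebra_simps)
  qed
  then have "(\<Sum>j<N. \<beta> * (Y - Y') * (y j - y' j) + \<beta> * (y j - y' j)\<^sup>2) \<le> 0"
    by (intro sum_nonpos) auto
  also have "(\<Sum>j<N. \<beta> * (Y - Y') * (y j - y' j) + \<beta> * (y j - y' j)\<^sup>2)
     = \<beta> * (Y - Y')\<^sup>2 + \<beta> * (\<Sum>j<N. (y j - y' j)\<^sup>2)"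
    by (simp add: sum.distrib sum_distrib_left[symmetric] sum_subtractf Y_def Y'_def
        power2_eq_square)
  finally have "(\<Sum>j<N. (y j - y' j)\<^sup>2) \<le> 0"
    using \<beta> by (smt (verit) mult_nonneg_nonneg mult_pos_pos zero_le_power2)
  then have "(\<Sum>j<N. (y j - y' j)\<^sup>2) = 0"
    by (intro antisym sum_nonneg) auto
  then have "y j = y' j" if "j < N" for j
    using that by (subst (asm) sum_nonneg_eq_0_iff) auto
  moreover have "y j = y' j" if "\<not> j < N" for j
    using that ne ne' by (auto simp: spot_NE_def)
  ultimately show ?thesis by blast
qed

definition clamp :: "real \<Rightarrow> real \<Rightarrow> real" where
  "clamp k t = max 0 (min k t)"

lemma clamp_bounds: "0 \<le> k \<Longrightarrow> 0 \<le> clamp k t \<and> clamp k t \<le> k"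
  by (simp add: clamp_def)

lemma clamp_zero [simp]: "0 \<le> k \<Longrightarrow> clamp k 0 = 0"
  by (simp add: clamp_def)

lemma clamp_variational_ineq:
  assumes "0 \<le> w" "w \<le> k"
  shows "(w - clamp k t) * (t - clamp k t) \<le> 0"
  using assms by (cases "t \<le> 0"; cases "t \<le> k")
    (auto simp: clamp_def mult_nonneg_nonpos mult_nonpos_nonneg)

lemma continuous_on_clamp [continuous_intros]:
  "continuous_on S g \<Longrightarrow> continuous_on S (\<lambda>x. clamp k (g x))"
  unfolding clamp_def by (intro continuous_intros)

lemma spot_NE_symmetric:
  fixes \<alpha> \<beta> c k f :: real and M N :: nat and x :: "nat \<Rightarrow> real"
  assumes \<beta>: "\<beta> > 0" and k: "k > 0"
  defines "v \<equiv> clamp k ((\<alpha> - c - \<beta> * (\<Sum>i<M. x i) + \<beta> * f) / (\<beta> * (real N + 1)))"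
  shows "spot_NE \<alpha> \<beta> c k M N (\<lambda>_. f) x (\<lambda>j. if j < N then v else 0)"
proof -
  define y where "y = (\<lambda>j::nat. if j < N then v else 0)"
  define a where "a = (\<alpha> - c - \<beta> * (\<Sum>i<M. x i) + \<beta> * f) / (\<beta> * (real N + 1))"
  have v: "v = clamp k a" "0 \<le> v" "v \<le> k" using clamp_bounds[of k a] k by (auto simp: v_def a_def)
  have "\<beta> * (real N + 1) * a = \<alpha> - c - \<beta> * (\<Sum>i<M. x i) + \<beta> * f"
    using \<beta> by (simp add: a_def add_pos_nonneg)
  then have grad: "\<alpha> - \<beta> * ((\<Sum>i<M. x i) + (\<Sum>j'<N. y j')) - c - \<beta> * (y j - f)
      = \<beta> * (real N + 1) * (a - v)" if "j < N" for j
    using that by (simp add: y_def algebra_simps)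
  have "spot_payoff \<alpha> \<beta> c M N (\<lambda>_. f) x (y(j := w)) j \<le> spot_payoff \<alpha> \<beta> c M N (\<lambda>_. f) x y j"
    if j: "j < N" and w: "0 \<le> w" "w \<le> k" for j w
  proof -
    have "(w - v) * (a - v) \<le> 0" using clamp_variational_ineq[OF w] v by simp
    moreover have "\<beta> * (real N + 1) > 0" using \<beta> by simp
    ultimately have "(w - v) * (\<beta> * (real N + 1) * (a - v)) \<le> 0"
      by (metis mult.left_commute mult_nonneg_nonpos less_le)
    moreover have "\<beta> * (w - v)\<^sup>2 \<ge> 0" using \<beta> by simp
    ultimately show ?thesis
      using spot_payoff_fun_upd_diff[OF j, of \<alpha> \<beta> c M "\<lambda>_. f" x y w] grad[OF j] j
      by (simp add: y_def)
  qed
  then show ?thesis using v unfolding spot_NE_def y_def[symmetric] by (auto simp: y_def)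
qed

lemma spot_y_symmetric:
  assumes "\<beta> > 0" "k > 0"
  shows "spot_y \<alpha> \<beta> c k M N (\<lambda>_. f) x = (\<lambda>j. if j < N then
     clamp k ((\<alpha> - c - \<beta> * (\<Sum>i<M. x i) + \<beta> * f) / (\<beta> * (real N + 1))) else 0)"
proof -
  have ne: "spot_NE \<alpha> \<beta> c k M N (\<lambda>_. f) x (\<lambda>j. if j < N then
     clamp k ((\<alpha> - c - \<beta> * (\<Sum>i<M. x i) + \<beta> * f) / (\<beta> * (real N + 1))) else 0)"
    by (rule spot_NE_symmetric[OF assms])
  show ?thesis
    unfolding spot_y_def using ne spot_NE_unique[OF _ ne assms(1)] by (rule the_equality)
qed

subsection \<open>The leaders' deviation problem\<close>

text \<open>Profit, divided by \<beta>, of a leader producing xbar while the other leaders produce T/M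
  each and all followers hold the forward position T - \<alpha>x + \<triangle>C, with the followers' spot
  reply substituted; A stands for \<alpha>x.\<close>
definition deviation_profit :: "real \<Rightarrow> real \<Rightarrow> nat \<Rightarrow> nat \<Rightarrow> real \<Rightarrow> real \<Rightarrow> real" where
  "deviation_profit A T M N k xbar =
     (A - (T - T / real M + xbar) - real N * clamp k ((T / real M - xbar) / (real N + 1))) * xbar"

definition symmetric_reaction :: "real \<Rightarrow> real \<Rightarrow> nat \<Rightarrow> nat \<Rightarrow> real \<Rightarrow> bool" where
  "symmetric_reaction A T M N k \<longleftrightarrow> 0 \<le> T / real M \<and>
     (\<forall>xbar. 0 \<le> xbar \<longrightarrow> deviation_profit A T M N k xbar \<le> deviation_profit A T M N k (T / real M))"

lemma psi_sym_eq_deviation_profit: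
  assumes \<beta>: "\<beta> > 0" and k: "k > 0" and i: "i < M"
    and T: "T = (\<alpha> - C) / \<beta> - (c - C) / \<beta> + f"
  shows "psi_sym \<alpha> \<beta> C c k M N i xbar (T / real M) f
    = \<beta> * deviation_profit ((\<alpha> - C) / \<beta>) T M N k xbar"
proof -
  have M: "real M > 0" using i by simp
  define X where "X = T - T / real M + xbar"
  have X: "(\<Sum>i'<M. ((\<lambda>_. T / real M)(i := xbar)) i') = X"
    using sum_lessThan_fun_upd[OF i, of "\<lambda>_. T / real M" xbar] M by (simp add: X_def)
  have "\<alpha> - c - \<beta> * X + \<beta> * f = \<beta> * (T / real M - xbar)"
    using \<beta> by (simp add: X_def T diff_divide_distrib algebra_simps)
  then have follower: "(\<alpha> - c - \<beta> * X + \<beta> * f) / (\<beta> * (real N + 1))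
      = (T / real M - xbar) / (real N + 1)"
    using \<beta> by simp
  show ?thesis
    unfolding psi_sym_def leader_payoff_def spot_y_symmetric[OF \<beta> k] X follower
    using \<beta> by (simp add: price_def deviation_profit_def X_def field_simps)
qed

lemma Xset_iff_symmetric_reaction:
  assumes \<beta>: "\<beta> > 0" and k: "k > 0" and M: "M \<ge> 1"
    and T: "T = (\<alpha> - C) / \<beta> - (c - C) / \<beta> + f"
  shows "T / real M \<in> Xset \<alpha> \<beta> C c k M N f \<longleftrightarrow> symmetric_reaction ((\<alpha> - C) / \<beta>) T M N k"
proof -
  have "0 < M" using M by simp
  then show ?thesis
    unfolding Xset_def symmetric_reaction_def
    using psi_sym_eq_deviation_profit[OF \<beta> k _ T] \<beta> by auto
qed

lemma spot_y_followers_inactive: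
  assumes \<beta>: "\<beta> > 0" and k: "k > 0" and M: "M \<ge> 1"
    and T: "T = (\<alpha> - C) / \<beta> - (c - C) / \<beta> + f"
  shows "spot_y \<alpha> \<beta> c k M N (\<lambda>_. f) (\<lambda>_. T / real M) j = 0"
proof -
  have "\<alpha> - c - \<beta> * (\<Sum>i<M. T / real M) + \<beta> * f = 0"
    using \<beta> M by (simp add: T field_simps)
  then show ?thesis using k by (simp add: spot_y_symmetric[OF \<beta> k])
qed

subsection \<open>The set of symmetric reactions\<close>

text \<open>The share of a cut d in a leader's output that the followers do not make up for.\<close>
definition uncompensated_cut :: "nat \<Rightarrow> real \<Rightarrow> real \<Rightarrow> real" where
  "uncompensated_cut N k d = d - real N * clamp k (d / (real N + 1))"

lemma uncompensated_cut_nonneg: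
  assumes "0 \<le> d" "k > 0"
  shows "0 \<le> uncompensated_cut N k d"
proof -
  have "real N * clamp k (d / (real N + 1)) \<le> real N * (d / (real N + 1))"
    using assms by (intro mult_left_mono) (auto simp: clamp_def)
  also have "\<dots> \<le> d" using assms by (simp add: field_simps)
  finally show ?thesis by (simp add: uncompensated_cut_def)
qed

lemma uncompensated_cut_le: "k > 0 \<Longrightarrow> uncompensated_cut N k d \<le> d"
  by (simp add: uncompensated_cut_def clamp_def)

lemma deviation_profit_zero [simp]: "deviation_profit A T M N k 0 = 0"
  by (simp add: deviation_profit_def)

lemma deviation_profit_symmetric:
  "k > 0 \<Longrightarrow> deviation_profit A T M N k (T / real M) = (A - T) * (T / real M)"
  by (simp add: deviation_profit_def)

lemma deviation_profit_above:
  assumes "k > 0" "T / real M \<le> xbar"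
  shows "deviation_profit A T M N k xbar = (A - T + T / real M - xbar) * xbar"
proof -
  have "(T / real M - xbar) / (real N + 1) \<le> 0"
    using assms by (simp add: divide_nonpos_pos add_pos_nonneg)
  then show ?thesis using assms by (simp add: deviation_profit_def clamp_def algebra_simps)
qed

lemma deviation_profit_below:
  "k > 0 \<Longrightarrow> deviation_profit A T M N k (T / real M - d) - deviation_profit A T M N k (T / real M)
    = - (A - T) * d + uncompensated_cut N k d * (T / real M - d)"
  by (simp add: deviation_profit_def uncompensated_cut_def algebra_simps
      add_divide_distrib diff_divide_distrib)

definition cournot_total :: "real \<Rightarrow> nat \<Rightarrow> real" where
  "cournot_total A M = real M * A / (real M + 1)"

lemma cournot_total_le_iff:
  assumes "M \<ge> 1"
  shows "cournot_total A M \<le> T \<longleftrightarrow> A - T \<le> T / real M"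
proof -
  have M: "real M > 0" using assms by simp
  have "A - T \<le> T / real M \<longleftrightarrow> real M * A \<le> T * (real M + 1)"
    using M by (simp add: field_simps)
  also have "\<dots> \<longleftrightarrow> cournot_total A M \<le> T"
    by (simp add: cournot_total_def pos_divide_le_eq add_pos_nonneg)
  finally show ?thesis by simp
qed

lemma no_profitable_increase:
  assumes k: "k > 0" and M: "M \<ge> 1" and T: "cournot_total A M \<le> T"
    and xbar: "T / real M \<le> xbar"
  shows "deviation_profit A T M N k xbar \<le> deviation_profit A T M N k (T / real M)"
proof -
  define x where "x = T / real M"
  define e where "e = xbar - x"
  have "deviation_profit A T M N k xbar - deviation_profit A T M N k x
      = (A - T + x - (x + e)) * (x + e) - (A - T) * x"
    using deviation_profit_above[OF k xbar, of A N] deviation_profit_symmetric[OF k, of A T M N]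
    by (simp add: x_def e_def)
  also have "\<dots> = e * ((A - T) - x) - e\<^sup>2"
    by (simp add: power2_eq_square algebra_simps)
  finally have "deviation_profit A T M N k xbar - deviation_profit A T M N k x
      = e * ((A - T) - x) - e\<^sup>2" .
  moreover have "e * ((A - T) - x) \<le> 0"
    using xbar T cournot_total_le_iff[OF M] by (simp add: x_def e_def mult_nonneg_nonpos)
  ultimately show ?thesis unfolding x_def by (smt (verit) zero_le_power2)
qed

lemma symmetric_reaction_no_profitable_cut:
  assumes "symmetric_reaction A T M N k" "k > 0" "0 \<le> d" "d \<le> T / real M"
  shows "- (A - T) * d + uncompensated_cut N k d * (T / real M - d) \<le> 0"
proof -
  have "deviation_profit A T M N k (T / real M - d) \<le> deviation_profit A T M N k (T / real M)"
    using assms unfolding symmetric_reaction_def by auto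
  then show ?thesis using deviation_profit_below[OF assms(2), of A T M N d] by linarith
qed

lemma symmetric_reactionI:
  assumes k: "k > 0" and M: "M \<ge> 1" and T: "cournot_total A M \<le> T" "0 \<le> T"
    and cut: "\<And>d. 0 < d \<Longrightarrow> d \<le> T / real M
      \<Longrightarrow> - (A - T) * d + uncompensated_cut N k d * (T / real M - d) \<le> 0"
  shows "symmetric_reaction A T M N k"
  unfolding symmetric_reaction_def
proof (intro conjI allI impI)
  show "0 \<le> T / real M" using T by simp
  fix xbar :: real assume "0 \<le> xbar"
  show "deviation_profit A T M N k xbar \<le> deviation_profit A T M N k (T / real M)"
  proof (cases "T / real M \<le> xbar")
    case True then show ?thesis using no_profitable_increase[OF k M T(1)] by blast
  next
    case False
    then have "- (A - T) * (T / real M - xbar)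
        + uncompensated_cut N k (T / real M - xbar) * (T / real M - (T / real M - xbar)) \<le> 0"
      using cut[of "T / real M - xbar"] \<open>0 \<le> xbar\<close> by simp
    then show ?thesis using deviation_profit_below[OF k, of A T M N "T / real M - xbar"] by simp
  qed
qed

lemma symmetric_reaction_ge_cournot:
  assumes r: "symmetric_reaction A T M N k" and k: "k > 0" and M: "M \<ge> 1"
  shows "cournot_total A M \<le> T"
proof (rule ccontr)
  assume "\<not> ?thesis"
  then have "A - T > T / real M" using cournot_total_le_iff[OF M] by simp
  define x where "x = T / real M"
  define \<delta> where "\<delta> = (A - T - x) / 2"
  have \<delta>: "\<delta> > 0" using \<open>A - T > T / real M\<close> by (simp add: \<delta>_def x_def)
  have "0 \<le> x" using r by (simp add: symmetric_reaction_def x_def)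
  then have "deviation_profit A T M N k (x + \<delta>) \<le> deviation_profit A T M N k x"
    using r \<delta> unfolding symmetric_reaction_def x_def by auto
  moreover have "deviation_profit A T M N k (x + \<delta>) = (A - T + x - (x + \<delta>)) * (x + \<delta>)"
    using deviation_profit_above[OF k, of T M "x + \<delta>" A N] \<delta> by (simp add: x_def)
  moreover have "deviation_profit A T M N k x = (A - T) * x"
    using deviation_profit_symmetric[OF k] by (simp add: x_def)
  moreover have "(A - T + x - (x + \<delta>)) * (x + \<delta>) - (A - T) * x = \<delta>\<^sup>2"
    by (simp add: \<delta>_def power2_eq_square field_simps)
  ultimately show False using \<delta> by (smt (verit) zero_less_power)
qed

lemma symmetric_reaction_profit_nonneg:
  assumes "symmetric_reaction A T M N k" "k > 0"
  shows "0 \<le> (A - T) * (T / real M)"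
proof -
  have "deviation_profit A T M N k 0 \<le> deviation_profit A T M N k (T / real M)"
    using assms(1) unfolding symmetric_reaction_def by blast
  then show ?thesis by (simp add: deviation_profit_symmetric[OF assms(2)])
qed

lemma symmetric_reaction_le:
  assumes r: "symmetric_reaction A T M N k" and k: "k > 0" and M: "M \<ge> 1" and A: "A \<ge> 0"
  shows "T \<le> A"
proof (rule ccontr)
  assume "\<not> T \<le> A"
  then have "(A - T) * (T / real M) < 0" using A M by (intro mult_neg_pos) auto
  then show False using symmetric_reaction_profit_nonneg[OF r k] by simp
qed

lemma symmetric_reaction_nonpos_iff:
  assumes A: "A \<le> 0" and k: "k > 0" and M: "M \<ge> 1"
  shows "symmetric_reaction A T M N k \<longleftrightarrow> T = 0"
proof
  assume r: "symmetric_reaction A T M N k"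
  have "0 \<le> T" using r M by (simp add: symmetric_reaction_def zero_le_divide_iff)
  moreover have "T \<le> 0"
  proof (rule ccontr)
    assume "\<not> T \<le> 0"
    then have "(A - T) * (T / real M) < 0" using A M by (intro mult_neg_pos) auto
    then show False using symmetric_reaction_profit_nonneg[OF r k] by simp
  qed
  ultimately show "T = 0" by simp
next
  assume "T = 0"
  show "symmetric_reaction A T M N k"
    unfolding symmetric_reaction_def
  proof (intro conjI allI impI)
    fix xbar :: real assume "0 \<le> xbar"
    then have "deviation_profit A T M N k xbar = (A - xbar) * xbar"
      using deviation_profit_above[OF k, of T M xbar A N] \<open>T = 0\<close> by simp
    also have "\<dots> \<le> 0" using A \<open>0 \<le> xbar\<close> by (simp add: mult_nonpos_nonneg)
    finally show "deviation_profit A T M N k xbar \<le> deviation_profit A T M N k (T / real M)"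
      using \<open>T = 0\<close> by simp
  qed (use \<open>T = 0\<close> in simp)
qed

lemma symmetric_reaction_cournot:
  assumes A: "A > 0" and k: "k > 0" and M: "M \<ge> 1"
  shows "symmetric_reaction A (cournot_total A M) M N k"
proof -
  define T where "T = cournot_total A M"
  have "A - T = A / (real M + 1)"
    by (simp add: T_def cournot_total_def diff_divide_eq_iff algebra_simps)
  moreover have "T / real M = A / (real M + 1)"
    using M by (simp add: T_def cournot_total_def)
  ultimately have eq: "A - T = T / real M" by simp
  show ?thesis unfolding T_def[symmetric]
  proof (rule symmetric_reactionI[OF k M])
    show "cournot_total A M \<le> T" "0 \<le> T" using A by (simp_all add: T_def cournot_total_def)
    fix d :: real assume d: "0 < d" "d \<le> T / real M"
    have "uncompensated_cut N k d * (T / real M - d) \<le> d * (T / real M - d)"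
      using uncompensated_cut_le[OF k] d by (intro mult_right_mono) auto
    also have "\<dots> \<le> d * (T / real M)" using d by (simp add: algebra_simps)
    finally show "- (A - T) * d + uncompensated_cut N k d * (T / real M - d) \<le> 0"
      using eq by (simp add: algebra_simps)
  qed
qed

lemma symmetric_reaction_downward_closed:
  assumes r: "symmetric_reaction A T M N k" and k: "k > 0" and M: "M \<ge> 1"
    and T': "cournot_total A M \<le> T'" "0 \<le> T'" "T' \<le> T"
  shows "symmetric_reaction A T' M N k"
proof (rule symmetric_reactionI[OF k M T'(1,2)])
  have le: "T' / real M \<le> T / real M" using T' M by (simp add: divide_right_mono)
  fix d :: real assume d: "0 < d" "d \<le> T' / real M"
  have "- (A - T) * d + uncompensated_cut N k d * (T / real M - d) \<le> 0"
    using symmetric_reaction_no_profitable_cut[OF r k] d le by auto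
  moreover have "- (A - T') * d \<le> - (A - T) * d" using d T' by (simp add: mult_right_mono)
  moreover have "uncompensated_cut N k d * (T' / real M - d)
      \<le> uncompensated_cut N k d * (T / real M - d)"
    using uncompensated_cut_nonneg[of d k N] d k le by (intro mult_left_mono) auto
  ultimately show "- (A - T') * d + uncompensated_cut N k d * (T' / real M - d) \<le> 0"
    by linarith
qed

lemma continuous_on_deviation_profit:
  assumes "continuous_on UNIV g"
  shows "continuous_on UNIV (\<lambda>T. deviation_profit A T M N k (g T))"
  using assms unfolding deviation_profit_def divide_inverse by (intro continuous_intros)

lemma closed_symmetric_reactions: "closed {T. symmetric_reaction A T M N k}"
proof -
  have "closed {T. 0 \<le> xbar \<longrightarrow>
      deviation_profit A T M N k xbar \<le> deviation_profit A T M N k (T / real M)}" for xbar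
    by (cases "0 \<le> xbar")
      (simp_all add: closed_Collect_le continuous_on_deviation_profit divide_inverse
        continuous_on_mult_right)
  then have "closed {T. \<forall>xbar. 0 \<le> xbar \<longrightarrow>
      deviation_profit A T M N k xbar \<le> deviation_profit A T M N k (T / real M)}"
    by (rule closed_Collect_all)
  moreover have "closed {T. 0 \<le> T / real M}"
    unfolding divide_inverse by (intro closed_Collect_le continuous_intros)
  ultimately show ?thesis
    unfolding symmetric_reaction_def by (intro closed_Collect_conj)
qed

lemma symmetric_reactions_pos:
  assumes A: "A > 0" and k: "k > 0" and M: "M \<ge> 1"
  obtains hi where "{T. symmetric_reaction A T M N k} = {cournot_total A M..hi}" "hi \<le> A"
proof
  define S where "S = {T. symmetric_reaction A T M N k}"
  have le: "T \<le> A" if "T \<in> S" for T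
    using that symmetric_reaction_le[OF _ k M] A by (simp add: S_def)
  have bdd: "bdd_above S" using le by (auto simp: bdd_above_def)
  have cournot: "cournot_total A M \<in> S"
    using symmetric_reaction_cournot[OF A k M] by (simp add: S_def)
  have sup: "Sup S \<in> S"
    using closed_contains_Sup[OF _ bdd] cournot closed_symmetric_reactions by (auto simp: S_def)
  have "0 \<le> cournot_total A M" using A by (simp add: cournot_total_def)
  show "S = {cournot_total A M..Sup S}"
  proof (intro equalityI subsetI)
    fix T assume "T \<in> S"
    then show "T \<in> {cournot_total A M..Sup S}"
      using symmetric_reaction_ge_cournot[OF _ k M] cSup_upper[OF _ bdd] by (simp add: S_def)
  next
    fix T assume "T \<in> {cournot_total A M..Sup S}"
    then show "T \<in> S"
      using symmetric_reaction_downward_closed[OF _ k M, of A "Sup S" N T] sup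
        \<open>0 \<le> cournot_total A M\<close> by (simp add: S_def)
  qed
  show "Sup S \<le> A" using le sup .
qed

lemma symmetric_reactions_Icc:
  assumes k: "k > 0" and M: "M \<ge> 1"
  obtains lo hi where "{T. symmetric_reaction A T M N k} = {lo..hi}" "lo \<le> hi"
    "hi - lo \<le> \<bar>A / real M\<bar>"
proof (cases "A > 0")
  case True
  then obtain hi where S: "{T. symmetric_reaction A T M N k} = {cournot_total A M..hi}" "hi \<le> A"
    using symmetric_reactions_pos[OF _ k M] by blast
  have "cournot_total A M \<le> hi" using S(1) symmetric_reaction_cournot[OF True k M] by auto
  moreover have "A - cournot_total A M \<le> A / real M"
    using True M by (simp add: cournot_total_def field_simps)
  moreover have "\<bar>A / real M\<bar> = A / real M" using True by simp
  ultimately show ?thesis using S by (intro that[of "cournot_total A M" hi]) linarith+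
next
  case False
  then have "{T. symmetric_reaction A T M N k} = {0..0}"
    using symmetric_reaction_nonpos_iff[OF _ k M] by auto
  then show ?thesis by (rule that) simp_all
qed

theorem lemma2:
  shows "\<exists>K::real. \<forall>(\<alpha>::real) (\<beta>::real) (C::real) (c::real) (k::real) (M::nat) (N::nat).
    (M \<ge> 1 \<and> N \<ge> 2 \<and> \<alpha> > 0 \<and> \<beta> > 0 \<and> C > 0 \<and> c \<ge> C \<and> k > 0) \<longrightarrow>
    (let \<alpha>x = (\<alpha> - C) / \<beta>; dC = (c - C) / \<beta>;
         xf = (\<lambda>f. (\<alpha>x - dC + f) / real M);
         good = (\<lambda>fl fh. \<forall>f. (fl \<le> f \<and> f \<le> fh) \<longleftrightarrow> xf f \<in> Xset \<alpha> \<beta> C c k M N f)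
     in \<exists>fl fh. good fl fh \<and> (\<forall>fl' fh'. good fl' fh' \<longrightarrow> fl' = fl \<and> fh' = fh) \<and>
          (\<forall>f. fl \<le> f \<and> f \<le> fh \<longrightarrow>
             (\<forall>j<N. spot_y \<alpha> \<beta> c k M N (\<lambda>_. f) (\<lambda>_. xf f) j = 0)) \<and>
          \<bar>fh - fl\<bar> \<le> K * \<bar>\<alpha>x / real M\<bar>)"
proof (intro exI[of _ 1] allI impI, goal_cases)
  case (1 \<alpha> \<beta> C c k M N)
  then have M: "M \<ge> 1" and \<beta>: "\<beta> > 0" and k: "k > 0" by auto
  define A where "A = (\<alpha> - C) / \<beta>"
  define D where "D = (c - C) / \<beta>"
  obtain lo hi where S: "{T. symmetric_reaction A T M N k} = {lo..hi}" "lo \<le> hi"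
    "hi - lo \<le> \<bar>A / real M\<bar>"
    using symmetric_reactions_Icc[OF k M] .
  have X: "(A - D + f) / real M \<in> Xset \<alpha> \<beta> C c k M N f \<longleftrightarrow> f \<in> {lo - A + D..hi - A + D}" for f
    using Xset_iff_symmetric_reaction[OF \<beta> k M, of "A - D + f"] S(1)
    by (auto simp: A_def D_def set_eq_iff)
  have "(\<forall>f. (fl \<le> f \<and> f \<le> fh) \<longleftrightarrow> f \<in> {lo - A + D..hi - A + D})
      \<longleftrightarrow> fl = lo - A + D \<and> fh = hi - A + D" for fl fh
    using S(2) Icc_eq_Icc[of fl fh "lo - A + D" "hi - A + D"] by (auto simp: set_eq_iff)
  then show ?case
    unfolding Let_def A_def[symmetric] D_def[symmetric] X
    using S(2,3) spot_y_followers_inactive[OF \<beta> k M, of "A - D + _"]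
    by (auto simp: A_def D_def)
qed

end
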